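(* Let $(G,\cdot)$ be a loop with identity $e$ and $(H,\cdot)$ a non-trivial subloop such that $(xs\cdot z)s=x(sz\cdot s)$ for all $x,z\in G$, $s\in H$, and such that $s^2\in N_\rho(G)\cap H$ for all $s\in H$. Then for every $s\in H$, the map $L_sR_s^{-1}$ is a second Smarandache semi-automorphism of $G_H$, i.e. $e(L_sR_s^{-1})=e$ and $(ty\cdot t)L_sR_s^{-1}=(tL_sR_s^{-1}\cdot yL_sR_s^{-1})\,tL_sR_s^{-1}$ for all $y\in G$, $t\in H$.
   Context: Juxtaposition binds more tightly than $\cdot$. Maps are written on the right and composed left to right; $xR_s=x\cdot s$, $xL_s=s\cdot x$, $s^2=ss$. The right nucleus is $N_\rho(G)=\{a\in G: y\cdot xa=yx\cdot a\ \forall x,y\in G\}$. *)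

theory Defs
  imports Main
begin

definition loop :: "'a set \<Rightarrow> ('a \<Rightarrow> 'a \<Rightarrow> 'a) \<Rightarrow> 'a \<Rightarrow> bool" where
  "loop G m e \<longleftrightarrow> e \<in> G \<and> (\<forall>x\<in>G. \<forall>y\<in>G. m x y \<in> G)
     \<and> (\<forall>x\<in>G. m e x = x \<and> m x e = x)
     \<and> (\<forall>a\<in>G. \<forall>b\<in>G. \<exists>!x. x \<in> G \<and> m a x = b)
     \<and> (\<forall>a\<in>G. \<forall>b\<in>G. \<exists>!y. y \<in> G \<and> m y a = b)"

definition subloop :: "'a set \<Rightarrow> 'a set \<Rightarrow> ('a \<Rightarrow> 'a \<Rightarrow> 'a) \<Rightarrow> 'a \<Rightarrow> bool" where
  "subloop H G m e \<longleftrightarrow> H \<subseteq> G \<and> loop H m e"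

definition rdiv :: "'a set \<Rightarrow> ('a \<Rightarrow> 'a \<Rightarrow> 'a) \<Rightarrow> 'a \<Rightarrow> 'a \<Rightarrow> 'a" where
  "rdiv G m b a = (THE z. z \<in> G \<and> m z a = b)"

definition right_nucleus :: "'a set \<Rightarrow> ('a \<Rightarrow> 'a \<Rightarrow> 'a) \<Rightarrow> 'a set" where
  "right_nucleus G m = {a \<in> G. \<forall>x\<in>G. \<forall>y\<in>G. m y (m x a) = m (m y x) a}"

text \<open>The map L_s R_s^{-1} (maps act on the right, composed left to right): x \<mapsto> (s x) / s.\<close>
definition LR_inv :: "'a set \<Rightarrow> ('a \<Rightarrow> 'a \<Rightarrow> 'a) \<Rightarrow> 'a \<Rightarrow> 'a \<Rightarrow> 'a" where
  "LR_inv G m s x = rdiv G m (m s x) s"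

end

theory Submission
  imports Defs
begin

text \<open>Write \<open>\<phi> = L\<^sub>sR\<^sub>s\<^sup>-\<^sup>1\<close>, so that \<open>x\<phi>\<close> is characterised by \<open>x\<phi> \<cdot> s = sx\<close>.
  Specialising \<open>(xs \<cdot> z)s = x(sz \<cdot> s)\<close> to \<open>z = e\<close> gives \<open>xs \<cdot> s = x s\<^sup>2\<close>, and since \<open>s\<^sup>2\<close> lies in
  the right nucleus, \<open>(x\<phi> \<cdot> y\<phi>)s \<cdot> s = x\<phi> (y\<phi> s \<cdot> s) = x\<phi>(sy \<cdot> s) = (x\<phi> s \<cdot> y)s = (sx \<cdot> y)s\<close>;
  cancelling \<open>s\<close> yields \<open>(x\<phi> \<cdot> y\<phi>)s = sx \<cdot> y\<close>. The same computation, now applying the identity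
  also with \<open>t \<in> H\<close> in place of \<open>s\<close>, gives \<open>((t\<phi> \<cdot> y\<phi>)t\<phi>)s = s(ty \<cdot> t)\<close>, which is the claim.\<close>

lemma loop_unit_closed: "loop G m e \<Longrightarrow> e \<in> G"
  unfolding loop_def by simp

lemma loop_mult_closed: "loop G m e \<Longrightarrow> x \<in> G \<Longrightarrow> y \<in> G \<Longrightarrow> m x y \<in> G"
  unfolding loop_def by simp

lemma loop_left_unit: "loop G m e \<Longrightarrow> x \<in> G \<Longrightarrow> m e x = x"
  unfolding loop_def by simp

lemma loop_right_unit: "loop G m e \<Longrightarrow> x \<in> G \<Longrightarrow> m x e = x"
  unfolding loop_def by simp

lemma loop_right_division_unique:
  "loop G m e \<Longrightarrow> a \<in> G \<Longrightarrow> b \<in> G \<Longrightarrow> \<exists>!z. z \<in> G \<and> m z a = b"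
  unfolding loop_def by simp

lemma rdiv_closed_mult:
  assumes "loop G m e" "a \<in> G" "b \<in> G"
  shows "rdiv G m b a \<in> G" "m (rdiv G m b a) a = b"
  using theI'[OF loop_right_division_unique[OF assms]] unfolding rdiv_def by auto

lemma rdiv_eqI:
  assumes "loop G m e" "a \<in> G" "z \<in> G" "m z a = b"
  shows "rdiv G m b a = z"
proof -
  have "b \<in> G" using loop_mult_closed[OF assms(1,3,2)] assms(4) by simp
  show ?thesis
    unfolding rdiv_def
    by (rule the1_equality[OF loop_right_division_unique[OF assms(1,2) \<open>b \<in> G\<close>]])
       (simp add: assms(3,4))
qed

lemma loop_right_cancel:
  assumes "loop G m e" "a \<in> G" "x \<in> G" "y \<in> G" "m x a = m y a"
  shows "x = y"
  using rdiv_eqI[OF assms(1-3,5)] rdiv_eqI[OF assms(1,2,4) refl] by simp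

lemma LR_inv_closed: "loop G m e \<Longrightarrow> s \<in> G \<Longrightarrow> x \<in> G \<Longrightarrow> LR_inv G m s x \<in> G"
  unfolding LR_inv_def by (simp add: rdiv_closed_mult loop_mult_closed)

lemma LR_inv_mult_right:
  "loop G m e \<Longrightarrow> s \<in> G \<Longrightarrow> x \<in> G \<Longrightarrow> m (LR_inv G m s x) s = m s x"
  unfolding LR_inv_def by (simp add: rdiv_closed_mult loop_mult_closed)

lemma LR_inv_eqI:
  "loop G m e \<Longrightarrow> s \<in> G \<Longrightarrow> z \<in> G \<Longrightarrow> m z s = m s x \<Longrightarrow> LR_inv G m s x = z"
  unfolding LR_inv_def by (rule rdiv_eqI)

lemma LR_inv_unit: "loop G m e \<Longrightarrow> s \<in> G \<Longrightarrow> LR_inv G m s e = e"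
  by (rule LR_inv_eqI) (auto simp: loop_unit_closed loop_left_unit loop_right_unit)

lemma right_nucleusD:
  "a \<in> right_nucleus G m \<Longrightarrow> x \<in> G \<Longrightarrow> y \<in> G \<Longrightarrow> m y (m x a) = m (m y x) a"
  unfolding right_nucleus_def by blast

lemma mult_right_square:
  assumes G: "loop G m e" and sG: "s \<in> G" and xG: "x \<in> G"
    and id_s: "\<forall>x\<in>G. \<forall>z\<in>G. m (m (m x s) z) s = m x (m (m s z) s)"
  shows "m (m x s) s = m x (m s s)"
  using id_s[rule_format, OF xG loop_unit_closed[OF G]]
  by (simp add: sG xG loop_right_unit[OF G] loop_mult_closed[OF G])

lemma LR_inv_mult_mult_right:
  assumes G: "loop G m e" and sG: "s \<in> G" and xG: "x \<in> G" and yG: "y \<in> G"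
    and id_s: "\<forall>x\<in>G. \<forall>z\<in>G. m (m (m x s) z) s = m x (m (m s z) s)"
    and nuc: "m s s \<in> right_nucleus G m"
  shows "m (m (LR_inv G m s x) (LR_inv G m s y)) s = m (m s x) y"
proof -
  define a b where "a = LR_inv G m s x" and "b = LR_inv G m s y"
  have aG: "a \<in> G" and bG: "b \<in> G"
    unfolding a_def b_def using LR_inv_closed[OF G sG] xG yG by simp_all
  have abG: "m a b \<in> G" using loop_mult_closed[OF G aG bG] .
  have as: "m a s = m s x" and bs: "m b s = m s y"
    unfolding a_def b_def using LR_inv_mult_right[OF G sG] xG yG by simp_all
  have ab_s_G: "m (m a b) s \<in> G" and sxy_G: "m (m s x) y \<in> G"
    using loop_mult_closed[OF G] abG sG xG yG by simp_all
  have "m (m (m a b) s) s = m (m a b) (m s s)"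
    using mult_right_square[OF G sG abG id_s] .
  also have "\<dots> = m a (m b (m s s))"
    using right_nucleusD[OF nuc bG aG] by simp
  also have "\<dots> = m a (m (m s y) s)"
    using mult_right_square[OF G sG bG id_s] bs by simp
  also have "\<dots> = m (m (m a s) y) s"
    using id_s[rule_format, OF aG yG] by simp
  also have "\<dots> = m (m (m s x) y) s"
    using as by simp
  finally have "m (m a b) s = m (m s x) y"
    by (rule loop_right_cancel[OF G sG ab_s_G sxy_G])
  then show ?thesis
    unfolding a_def b_def .
qed

lemma LR_inv_semi_automorphism:
  assumes G: "loop G m e" and sG: "s \<in> G" and tG: "t \<in> G" and yG: "y \<in> G"
    and id_s: "\<forall>x\<in>G. \<forall>z\<in>G. m (m (m x s) z) s = m x (m (m s z) s)"
    and id_t: "\<forall>x\<in>G. \<forall>z\<in>G. m (m (m x t) z) t = m x (m (m t z) t)"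
    and nuc: "m s s \<in> right_nucleus G m"
  shows "LR_inv G m s (m (m t y) t)
           = m (m (LR_inv G m s t) (LR_inv G m s y)) (LR_inv G m s t)"
proof -
  define a b where "a = LR_inv G m s t" and "b = LR_inv G m s y"
  have aG: "a \<in> G" and bG: "b \<in> G"
    unfolding a_def b_def using LR_inv_closed[OF G sG] tG yG by simp_all
  have abG: "m a b \<in> G" using loop_mult_closed[OF G aG bG] .
  have abaG: "m (m a b) a \<in> G" using loop_mult_closed[OF G abG aG] .
  have aba_s_G: "m (m (m a b) a) s \<in> G" and s_tyt_G: "m s (m (m t y) t) \<in> G"
    using loop_mult_closed[OF G] abaG sG tG yG by simp_all
  have as: "m a s = m s t"
    unfolding a_def using LR_inv_mult_right[OF G sG tG] .
  have ab_s: "m (m a b) s = m (m s t) y"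
    unfolding a_def b_def using LR_inv_mult_mult_right[OF G sG tG yG id_s nuc] .
  have "m (m (m (m a b) a) s) s = m (m (m a b) a) (m s s)"
    using mult_right_square[OF G sG abaG id_s] .
  also have "\<dots> = m (m a b) (m a (m s s))"
    using right_nucleusD[OF nuc aG abG] by simp
  also have "\<dots> = m (m a b) (m (m s t) s)"
    using mult_right_square[OF G sG aG id_s] as by simp
  also have "\<dots> = m (m (m (m a b) s) t) s"
    using id_s[rule_format, OF abG tG] by simp
  also have "\<dots> = m (m s (m (m t y) t)) s"
    using ab_s id_t[rule_format, OF sG yG] by simp
  finally have "m (m (m a b) a) s = m s (m (m t y) t)"
    by (rule loop_right_cancel[OF G sG aba_s_G s_tyt_G])
  then show ?thesis
    unfolding a_def b_def by (rule LR_inv_eqI[OF G sG abaG[unfolded a_def b_def]])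
qed

theorem corollary3p2:
  fixes G H :: "'a set" and m :: "'a \<Rightarrow> 'a \<Rightarrow> 'a" and e :: 'a
  assumes "loop G m e"
    and "subloop H G m e"
    and "H \<noteq> {e}"
    and "\<forall>x\<in>G. \<forall>z\<in>G. \<forall>s\<in>H. m (m (m x s) z) s = m x (m (m s z) s)"
    and "\<forall>s\<in>H. m s s \<in> right_nucleus G m \<inter> H"
  shows "\<forall>s\<in>H. LR_inv G m s e = e \<and>
           (\<forall>y\<in>G. \<forall>t\<in>H. LR_inv G m s (m (m t y) t)
               = m (m (LR_inv G m s t) (LR_inv G m s y)) (LR_inv G m s t))"
proof (intro ballI conjI)
  have HG: "H \<subseteq> G" using assms(2) unfolding subloop_def by (rule conjunct1)
  have identity: "\<forall>x\<in>G. \<forall>z\<in>G. m (m (m x u) z) u = m x (m (m u z) u)" if "u \<in> H" for u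
    using assms(4) that by blast
  fix s assume sH: "s \<in> H"
  have sG: "s \<in> G" using subsetD[OF HG sH] .
  show "LR_inv G m s e = e" by (rule LR_inv_unit[OF assms(1) sG])
  have nucleus: "m s s \<in> right_nucleus G m" using assms(5) sH by blast
  fix y t assume yG: "y \<in> G" and tH: "t \<in> H"
  show "LR_inv G m s (m (m t y) t)
      = m (m (LR_inv G m s t) (LR_inv G m s y)) (LR_inv G m s t)"
    by (rule LR_inv_semi_automorphism[OF assms(1) sG subsetD[OF HG tH] yG
          identity[OF sH] identity[OF tH] nucleus])
qed

end
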